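(* Let $(\Sigma,\Pi)$ be a first-order signature over a variable system with the de Bruijn property and $T$ a theory over it. Then the Lindenbaum–Tarski structure $\mathcal H_{\Sigma,\Pi,T}=(\mathcal F_\Sigma,\mathrm{Pr}_{\Sigma,\Pi,T},\forall,\exists)$ is a first-order hyperdoctrine over $\mathcal F_\Sigma$, and it has the universal model property: $(\Gamma,\phi)\le(\Gamma,\psi)$ in $\mathrm{Pr}_{\Sigma,\Pi,T}(\Gamma)$ if and only if $(\phi\Rightarrow_\Gamma\psi)\in\mathrm{Thm}(\Sigma,\Pi,T)$.
   Context: Type system: fix an infinite set $V$ of variables with decidable equality and a fresh variable provider: functions $\varphi,\mathsf{fr}$ assigning to each finite $X\subseteq V$ an inhabited $\varphi(X)\subseteq V\setminus X$ and $\mathsf{fr}(X)\in\varphi(X)$; de Bruijn property: $\varphi(X)=\{\mathsf{fr}(X)\}$. Disjoint sets $F$ (function symbols), $T$ (type symbols). Preelements: terms from variables and $F$; pretypes $S(t_1,\ldots,t_n)$, $S\in T$. $\mathrm V(E)$: variables of $E$; $E[\bar a/\bar x]$: simultaneous substitution. Precontext $\Gamma=x_1:A_1,\ldots,x_n:A_n$ with $x_k\in\varphi(\{x_1,\ldots,x_{k-1}\})$, $\mathrm V(A_k)\subseteq\{x_1,\ldots,x_{k-1}\}$; $\mathrm{OV}(\Gamma)=x_1,\ldots,x_n$; $\mathrm{Fresh}(\Gamma)=\varphi(\mathrm V(\Gamma))$, $\mathrm{fresh}(\Gamma)=\mathsf{fr}(\mathrm V(\Gamma))$; $E[\bar a/\Gamma]=E[\bar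 a/x_1,\ldots,x_n]$. Top variables $\mathrm{TV}(\langle\rangle)=\emptyset$, $\mathrm{TV}(\Gamma,x:A)=(\mathrm{TV}(\Gamma)\setminus\mathrm V(A))\cup\{x\}$; a determining sequence is a strictly increasing $\bar i=i_1,\ldots,i_k$ with $\mathrm{TV}(\Gamma)\subseteq\{x_{i_1},\ldots,x_{i_k}\}$, $\bar a_{\bar i}=a_{i_1},\ldots,a_{i_k}$. Declarations $(\Gamma,S,\bar i)$ and $(\Gamma,f,\bar i,U)$ ($\mathrm V(U)\subseteq\mathrm V(\Gamma)$), each symbol at most once. $\mathcal J(\Sigma)$: smallest set of judgements closed under (R1) $\langle\rangle$ context; (R2) $\Gamma$ context, $A$ type $(\Gamma)$ $\Rightarrow$ $\Gamma,x:A$ context ($x\in\mathrm{Fresh}(\Gamma)$); (R3) $x_1:A_1,\ldots,x_n:A_n$ context $\Rightarrow$ $x_i:A_i\ (x_1:A_1,\ldots,x_n:A_n)$; (R4) $(\Gamma,S,\bar i)\in\Sigma$, $\bar a:\Delta\to\Gamma$ $\Rightarrow$ $S(\bar a_{\bar i})$ type $(\Delta)$; (R5) $(\Gamma,f,\bar i,U)\in\Sigma$, $\bar a:\Delta\to\Gamma$, $U[\bar a/\Gamma]$ type $(\Delta)$ $\Rightarrow$ $f(\bar a_{\bar i}):U[\bar a/\Gamma]\ (\Delta)$; where "$\bar a:\Delta\to\Gamma$" abbreviates $\Delta$ context, $\Gamma$ context, $a_k:A_k[a_1,\ldots,a_{k-1}/x_1,\ldots,x_{k-1}]\ (\Delta)$.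 $\Sigma$ is a signature if declared contexts are contexts and declared $U$ are types in $\mathcal J(\Sigma)$. Cwf: a category $\mathcal C$ with terminal object; classes $\mathrm{Ty}(\Gamma)$ with functorial substitution $A\{f\}$; context extension $\Gamma.A$ with $\mathrm p(A):\Gamma.A\to\Gamma$; classes $\mathrm{Tm}(\Gamma,A)$ with functorial $a\{f\}\in\mathrm{Tm}(\Delta,A\{f\})$; $\mathrm v_A\in\mathrm{Tm}(\Gamma.A,A\{\mathrm p(A)\})$; $\langle f,a\rangle_A:\Delta\to\Gamma.A$ for $a\in\mathrm{Tm}(\Delta,A\{f\})$ with $\mathrm p(A)\langle f,a\rangle_A=f$, $\mathrm v_A\{\langle f,a\rangle_A\}=a$, $\langle\mathrm p(A)h,\mathrm v_A\{h\}\rangle_A=h$, $\langle f,a\rangle_A g=\langle fg,a\{g\}\rangle_A$; $f.A=\langle f\circ\mathrm p(A\{f\}),\mathrm v_{A\{f\}}\rangle_A:\Delta.A\{f\}\to\Gamma.A$. The cwf $\mathcal F_\Sigma$: objects are contexts $\Gamma$ (i.e. ($\Gamma$ context)$\in\mathcal J(\Sigma)$); morphisms $(\Delta,\Gamma,\bar a)$ with $\bar a:\Delta\to\Gamma$ in $\mathcal J(\Sigma)$, composed by substitution, identity $(\Gamma,\Gamma,\mathrm{OV}(\Gamma))$; $\mathrm{Ty}(\Gamma)=\{(\Gamma,A):(A\text{ type }(\Gamma))\in\mathcal J(\Sigma)\}$, $(\Gamma,A)\{(\Delta,\Gamma,\bar a)\}=(\Delta,A[\bar a/\Gamma])$; $\mathrm{Tm}(\Gamma,(\Gamma,A))=\{((\Gamma,A),a):(a:A\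 (\Gamma))\in\mathcal J(\Sigma)\}$; $\Gamma.(\Gamma,S)=\langle\Gamma,\mathrm{fresh}(\Gamma):S\rangle$, $\mathrm p=(\Gamma.(\Gamma,S),\Gamma,\mathrm{OV}(\Gamma))$, $\mathrm v=((\Gamma.(\Gamma,S),S),\mathrm{fresh}(\Gamma))$, $\langle(\Delta,\Gamma,\bar s),((\Delta,S[\bar s/\Gamma]),b)\rangle=(\Delta,\Gamma.(\Gamma,S),(\bar s,b))$. Heyting (pre)algebra: a preorder $\le$ (not necessarily antisymmetric) with $\top,\bot,\wedge,\vee,\to$ satisfying $\bot\le x\le\top$, $z\le x\wedge y$ iff $z\le x$ and $z\le y$, $x\vee y\le z$ iff $x\le z$ and $y\le z$, $z\le(x\to y)$ iff $z\wedge x\le y$; morphisms are monotone maps preserving the operations and constants. A first-order hyperdoctrine over a cwf $\mathcal C$ is $(\mathcal C,\mathrm{Pr},\forall,\exists)$ with $\mathrm{Pr}:\mathcal C^{\mathrm{op}}\to\mathrm{Heyting}$ a functor ($R\{f\}=\mathrm{Pr}(f)(R)$) and, for $S\in\mathrm{Ty}(\Gamma)$, monotone $\forall_S,\exists_S:\mathrm{Pr}(\Gamma.S)\to\mathrm{Pr}(\Gamma)$ with $Q\le\forall_S(R)$ iff $Q\{\mathrm p(S)\}\le R$, and $\exists_S(R)\le Q$ iff $R\le Q\{\mathrm p(S)\}$ ($Q\in\mathrm{Pr}(\Gamma)$, $R\in\mathrm{Pr}(\Gamma.S)$), and for $f:\Delta\to\Gamma$: $\forall_S(R)\{f\}=\forall_{S\{f\}}(R\{f.S\})$,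 $\exists_S(R)\{f\}=\exists_{S\{f\}}(R\{f.S\})$. Logic: predicate symbols from a set $P$ disjoint from $F\cup T$; a predicate declaration is $(\Gamma,\bar i,R)$ with ($\Gamma$ context)$\in\mathcal J(\Sigma)$, $\bar i$ determining, $R\in P$; a predicate signature $\Pi$ declares each symbol at most once. $\mathrm{Form}(\Sigma,\Pi)$ is the smallest set of judgements "$\phi$ form $(\Gamma)$" with: $R(\bar a_{\bar i})$ form $(\Delta)$ for $(\Gamma,\bar i,R)\in\Pi$ and $\bar a:\Delta\to\Gamma$ in $\mathcal J(\Sigma)$; $\bot,\top$ form $(\Gamma)$ for contexts $\Gamma$; $(\phi\circ\psi)$ form $(\Gamma)$ for $\circ\in\{\wedge,\vee,\to\}$ from $\phi,\psi$ form $(\Gamma)$; $(Qx:A)\phi$ form $(\Gamma)$ for $Q\in\{\forall,\exists\}$ from $\phi$ form $(\Gamma,x:A)$ (with $(A\text{ type }(\Gamma))\in\mathcal J(\Sigma)$). Capture-avoiding substitution for $\bar a:\Delta\to\Gamma$: $\phi\{(\Delta,\Gamma,\bar a)\}=\phi[\bar a/\Gamma]$ for atomic $\phi$; it commutes with $\top,\bot,\wedge,\vee,\to$; and $((Qx:A)\theta)\{(\Delta,\Gamma,\bar a)\}=(Qy:A[\bar a/\Gamma])\,\theta\{(\langle\Delta,y:A[\bar a/\Gamma]\rangle,\langle\Gamma,x:A\rangle,(\bar a,y))\}$ with $y=\mathrm{fresh}(\Delta)$. A sequent is $\phi\Rightarrow_\Gamma\psi$ with $\phi,\psi$ form $(\Gamma)$;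 a theory is a set of sequents. Write $\mathbf p_\Gamma(x:A)=(\langle\Gamma,x:A\rangle,\Gamma,\mathrm{OV}(\Gamma))$. $\mathrm{Thm}(\Sigma,\Pi,T)$ is the smallest set of sequents containing $T$ and closed under: $\phi\Rightarrow_\Gamma\phi$; cut (from $\phi\Rightarrow_\Gamma\theta$, $\theta\Rightarrow_\Gamma\psi$ infer $\phi\Rightarrow_\Gamma\psi$); $\theta\wedge\psi\Rightarrow_\Gamma\theta$, $\theta\wedge\psi\Rightarrow_\Gamma\psi$, from $\phi\Rightarrow_\Gamma\theta$, $\phi\Rightarrow_\Gamma\psi$ infer $\phi\Rightarrow_\Gamma\theta\wedge\psi$, $\phi\Rightarrow_\Gamma\top$; $\theta\Rightarrow_\Gamma\theta\vee\psi$, $\psi\Rightarrow_\Gamma\theta\vee\psi$, from $\theta\Rightarrow_\Gamma\phi$, $\psi\Rightarrow_\Gamma\phi$ infer $\theta\vee\psi\Rightarrow_\Gamma\phi$, $\bot\Rightarrow_\Gamma\phi$; $\theta\wedge\psi\Rightarrow_\Gamma\phi$ iff $\theta\Rightarrow_\Gamma\psi\to\phi$ (both directions as rules); $\phi\{\mathbf p_\Gamma(x:A)\}\Rightarrow_{\Gamma,x:A}\psi$ iff $\phi\Rightarrow_\Gamma(\forall x:A)\psi$ (both directions); $\psi\Rightarrow_{\Gamma,x:A}\phi\{\mathbf p_\Gamma(x:A)\}$ iff $(\exists x:A)\psi\Rightarrow_\Gamma\phi$ (both directions); and substitution: from $\phi\Rightarrow_\Gamma\psi$ and $\bar a:\Delta\to\Gamma$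 in $\mathcal J(\Sigma)$ infer $\phi\{(\Delta,\Gamma,\bar a)\}\Rightarrow_\Delta\psi\{(\Delta,\Gamma,\bar a)\}$. Lindenbaum–Tarski structure: $\mathrm{Pr}_{\Sigma,\Pi,T}(\Gamma)=\{(\Gamma,\phi):(\phi\text{ form }(\Gamma))\in\mathrm{Form}(\Sigma,\Pi)\}$ ordered by $(\Gamma,\phi)\le(\Gamma,\psi)$ iff $(\phi\Rightarrow_\Gamma\psi)\in\mathrm{Thm}(\Sigma,\Pi,T)$, with Heyting operations given by the connectives; $\mathrm{Pr}((\Delta,\Gamma,\bar a))(\Gamma,\phi)=(\Delta,\phi\{(\Delta,\Gamma,\bar a)\})$; $\forall_{(\Gamma,A)}(\langle\Gamma,x:A\rangle,\psi)=(\Gamma,(\forall x:A)\psi)$ and $\exists_{(\Gamma,A)}(\langle\Gamma,x:A\rangle,\psi)=(\Gamma,(\exists x:A)\psi)$. *)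

theory Defs
  imports Main
begin

section \<open>Generic categories with families and first-order hyperdoctrines\<close>

text \<open>A cwf is presented by its operations; all arguments that the paper leaves implicit
  (the context of a type) are passed explicitly.  pair G A f a is the morphism
  \<langle>f,a\<rangle>_A for A in Ty(G).\<close>

record ('o,'m,'ty,'tm) cwf_ops =
  Ob    :: "'o set"
  Hom   :: "'o \<Rightarrow> 'o \<Rightarrow> 'm set"
  comp  :: "'m \<Rightarrow> 'm \<Rightarrow> 'm"            \<comment> \<open>comp g f = g \<circ> f\<close>
  ident :: "'o \<Rightarrow> 'm"
  termo :: "'o"
  Ty    :: "'o \<Rightarrow> 'ty set"
  tsub  :: "'ty \<Rightarrow> 'm \<Rightarrow> 'ty"
  ext   :: "'o \<Rightarrow> 'ty \<Rightarrow> 'o"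
  pp    :: "'o \<Rightarrow> 'ty \<Rightarrow> 'm"
  Tm    :: "'o \<Rightarrow> 'ty \<Rightarrow> 'tm set"
  msub  :: "'tm \<Rightarrow> 'm \<Rightarrow> 'tm"
  vv    :: "'o \<Rightarrow> 'ty \<Rightarrow> 'tm"
  pair  :: "'o \<Rightarrow> 'ty \<Rightarrow> 'm \<Rightarrow> 'tm \<Rightarrow> 'm"

definition is_cwf :: "('o,'m,'ty,'tm,'z) cwf_ops_scheme \<Rightarrow> bool" where
  "is_cwf C \<longleftrightarrow>
     \<comment> \<open>category\<close>
     (\<forall>G\<in>Ob C. ident C G \<in> Hom C G G) \<and>
     (\<forall>D\<in>Ob C. \<forall>G\<in>Ob C. \<forall>E\<in>Ob C. \<forall>f\<in>Hom C D G. \<forall>g\<in>Hom C G E. comp C g f \<in> Hom C D E) \<and>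
     (\<forall>D\<in>Ob C. \<forall>G\<in>Ob C. \<forall>f\<in>Hom C D G. comp C (ident C G) f = f \<and> comp C f (ident C D) = f) \<and>
     (\<forall>A\<in>Ob C. \<forall>B\<in>Ob C. \<forall>D\<in>Ob C. \<forall>E\<in>Ob C. \<forall>f\<in>Hom C A B. \<forall>g\<in>Hom C B D. \<forall>h\<in>Hom C D E.
         comp C h (comp C g f) = comp C (comp C h g) f) \<and>
     \<comment> \<open>terminal object\<close>
     termo C \<in> Ob C \<and> (\<forall>G\<in>Ob C. \<exists>!f. f \<in> Hom C G (termo C)) \<and>
     \<comment> \<open>types and their substitution\<close>
     (\<forall>D\<in>Ob C. \<forall>G\<in>Ob C. \<forall>f\<in>Hom C D G. \<forall>A\<in>Ty C G. tsub C A f \<in> Ty C D) \<and>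
     (\<forall>G\<in>Ob C. \<forall>A\<in>Ty C G. tsub C A (ident C G) = A) \<and>
     (\<forall>D\<in>Ob C. \<forall>G\<in>Ob C. \<forall>E\<in>Ob C. \<forall>f\<in>Hom C D G. \<forall>g\<in>Hom C G E. \<forall>A\<in>Ty C E.
         tsub C A (comp C g f) = tsub C (tsub C A g) f) \<and>
     \<comment> \<open>terms and their substitution\<close>
     (\<forall>D\<in>Ob C. \<forall>G\<in>Ob C. \<forall>f\<in>Hom C D G. \<forall>A\<in>Ty C G. \<forall>a\<in>Tm C G A. msub C a f \<in> Tm C D (tsub C A f)) \<and>
     (\<forall>G\<in>Ob C. \<forall>A\<in>Ty C G. \<forall>a\<in>Tm C G A. msub C a (ident C G) = a) \<and>
     (\<forall>D\<in>Ob C. \<forall>G\<in>Ob C. \<forall>E\<in>Ob C. \<forall>f\<in>Hom C D G. \<forall>g\<in>Hom C G E. \<forall>A\<in>Ty C E. \<forall>a\<in>Tm C E A.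
         msub C a (comp C g f) = msub C (msub C a g) f) \<and>
     \<comment> \<open>context comprehension\<close>
     (\<forall>G\<in>Ob C. \<forall>A\<in>Ty C G.
         ext C G A \<in> Ob C \<and> pp C G A \<in> Hom C (ext C G A) G \<and>
         vv C G A \<in> Tm C (ext C G A) (tsub C A (pp C G A))) \<and>
     (\<forall>D\<in>Ob C. \<forall>G\<in>Ob C. \<forall>A\<in>Ty C G. \<forall>f\<in>Hom C D G. \<forall>a\<in>Tm C D (tsub C A f).
         pair C G A f a \<in> Hom C D (ext C G A) \<and>
         comp C (pp C G A) (pair C G A f a) = f \<and>
         msub C (vv C G A) (pair C G A f a) = a) \<and>
     (\<forall>D\<in>Ob C. \<forall>G\<in>Ob C. \<forall>A\<in>Ty C G. \<forall>h\<in>Hom C D (ext C G A).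
         pair C G A (comp C (pp C G A) h) (msub C (vv C G A) h) = h) \<and>
     (\<forall>E\<in>Ob C. \<forall>D\<in>Ob C. \<forall>G\<in>Ob C. \<forall>A\<in>Ty C G. \<forall>f\<in>Hom C D G. \<forall>a\<in>Tm C D (tsub C A f).
         \<forall>g\<in>Hom C E D. comp C (pair C G A f a) g = pair C G A (comp C f g) (msub C a g))"

definition qmor :: "('o,'m,'ty,'tm,'z) cwf_ops_scheme \<Rightarrow> 'o \<Rightarrow> 'o \<Rightarrow> 'm \<Rightarrow> 'ty \<Rightarrow> 'm" where
  "qmor C D G f A = pair C G A (comp C f (pp C D (tsub C A f))) (vv C D (tsub C A f))"

definition heyting_prealg ::
  "'a set \<Rightarrow> ('a \<Rightarrow> 'a \<Rightarrow> bool) \<Rightarrow> 'a \<Rightarrow> 'a \<Rightarrow> ('a \<Rightarrow> 'a \<Rightarrow> 'a) \<Rightarrow> ('a \<Rightarrow> 'a \<Rightarrow> 'a) \<Rightarrow> ('a \<Rightarrow> 'a \<Rightarrow> 'a) \<Rightarrow> bool" where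
  "heyting_prealg H le tp bt cj dj im \<longleftrightarrow>
     tp \<in> H \<and> bt \<in> H \<and>
     (\<forall>x\<in>H. \<forall>y\<in>H. cj x y \<in> H \<and> dj x y \<in> H \<and> im x y \<in> H) \<and>
     (\<forall>x\<in>H. le x x) \<and>
     (\<forall>x\<in>H. \<forall>y\<in>H. \<forall>z\<in>H. le x y \<longrightarrow> le y z \<longrightarrow> le x z) \<and>
     (\<forall>x\<in>H. le bt x \<and> le x tp) \<and>
     (\<forall>x\<in>H. \<forall>y\<in>H. \<forall>z\<in>H. le z (cj x y) \<longleftrightarrow> le z x \<and> le z y) \<and>
     (\<forall>x\<in>H. \<forall>y\<in>H. \<forall>z\<in>H. le (dj x y) z \<longleftrightarrow> le x z \<and> le y z) \<and>
     (\<forall>x\<in>H. \<forall>y\<in>H. \<forall>z\<in>H. le z (im x y) \<longleftrightarrow> le (cj z x) y)"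

record ('o,'m,'ty,'pr) hdoc_ops =
  Pr     :: "'o \<Rightarrow> 'pr set"
  hle    :: "'o \<Rightarrow> 'pr \<Rightarrow> 'pr \<Rightarrow> bool"
  htop   :: "'o \<Rightarrow> 'pr"
  hbot   :: "'o \<Rightarrow> 'pr"
  hand   :: "'o \<Rightarrow> 'pr \<Rightarrow> 'pr \<Rightarrow> 'pr"
  hor    :: "'o \<Rightarrow> 'pr \<Rightarrow> 'pr \<Rightarrow> 'pr"
  himp   :: "'o \<Rightarrow> 'pr \<Rightarrow> 'pr \<Rightarrow> 'pr"
  prsub  :: "'m \<Rightarrow> 'pr \<Rightarrow> 'pr"
  hall   :: "'o \<Rightarrow> 'ty \<Rightarrow> 'pr \<Rightarrow> 'pr"
  hex    :: "'o \<Rightarrow> 'ty \<Rightarrow> 'pr \<Rightarrow> 'pr"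

definition pr_heyting :: "('o,'m,'ty,'pr,'z) hdoc_ops_scheme \<Rightarrow> 'o \<Rightarrow> bool" where
  "pr_heyting P G \<longleftrightarrow> heyting_prealg (Pr P G) (hle P G) (htop P G) (hbot P G) (hand P G) (hor P G) (himp P G)"

definition heyting_hom :: "('o,'m,'ty,'pr,'z) hdoc_ops_scheme \<Rightarrow> 'o \<Rightarrow> 'o \<Rightarrow> ('pr \<Rightarrow> 'pr) \<Rightarrow> bool" where
  "heyting_hom P G D h \<longleftrightarrow>
     (\<forall>x\<in>Pr P G. h x \<in> Pr P D) \<and>
     (\<forall>x\<in>Pr P G. \<forall>y\<in>Pr P G. hle P G x y \<longrightarrow> hle P D (h x) (h y)) \<and>
     h (htop P G) = htop P D \<and> h (hbot P G) = hbot P D \<and>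
     (\<forall>x\<in>Pr P G. \<forall>y\<in>Pr P G.
        h (hand P G x y) = hand P D (h x) (h y) \<and>
        h (hor P G x y) = hor P D (h x) (h y) \<and>
        h (himp P G x y) = himp P D (h x) (h y))"

definition first_order_hyperdoctrine ::
  "('o,'m,'ty,'tm,'z1) cwf_ops_scheme \<Rightarrow> ('o,'m,'ty,'pr,'z2) hdoc_ops_scheme \<Rightarrow> bool" where
  "first_order_hyperdoctrine C P \<longleftrightarrow>
     is_cwf C \<and>
     \<comment> \<open>Pr : C^op \<rightarrow> Heyting is a functor\<close>
     (\<forall>G\<in>Ob C. pr_heyting P G) \<and>
     (\<forall>D\<in>Ob C. \<forall>G\<in>Ob C. \<forall>f\<in>Hom C D G. heyting_hom P G D (prsub P f)) \<and>
     (\<forall>G\<in>Ob C. \<forall>R\<in>Pr P G. prsub P (ident C G) R = R) \<and>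
     (\<forall>D\<in>Ob C. \<forall>G\<in>Ob C. \<forall>E\<in>Ob C. \<forall>f\<in>Hom C D G. \<forall>g\<in>Hom C G E. \<forall>R\<in>Pr P E.
         prsub P (comp C g f) R = prsub P f (prsub P g R)) \<and>
     \<comment> \<open>quantifiers\<close>
     (\<forall>G\<in>Ob C. \<forall>S\<in>Ty C G.
        (\<forall>R\<in>Pr P (ext C G S). hall P G S R \<in> Pr P G \<and> hex P G S R \<in> Pr P G) \<and>
        (\<forall>R\<in>Pr P (ext C G S). \<forall>R'\<in>Pr P (ext C G S). hle P (ext C G S) R R' \<longrightarrow>
             hle P G (hall P G S R) (hall P G S R') \<and> hle P G (hex P G S R) (hex P G S R')) \<and>
        (\<forall>Q\<in>Pr P G. \<forall>R\<in>Pr P (ext C G S).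
             (hle P G Q (hall P G S R) \<longleftrightarrow> hle P (ext C G S) (prsub P (pp C G S) Q) R) \<and>
             (hle P G (hex P G S R) Q \<longleftrightarrow> hle P (ext C G S) R (prsub P (pp C G S) Q))) \<and>
        (\<forall>D\<in>Ob C. \<forall>f\<in>Hom C D G. \<forall>R\<in>Pr P (ext C G S).
             prsub P f (hall P G S R) = hall P D (tsub C S f) (prsub P (qmor C D G f S) R) \<and>
             prsub P f (hex P G S R) = hex P D (tsub C S f) (prsub P (qmor C D G f S) R)))"

section \<open>Variable systems\<close>

definition var_system :: "('v set \<Rightarrow> 'v set) \<Rightarrow> ('v set \<Rightarrow> 'v) \<Rightarrow> bool" where
  "var_system phi fr \<longleftrightarrow> infinite (UNIV :: 'v set) \<and>
     (\<forall>X. finite X \<longrightarrow> phi X \<subseteq> - X \<and> fr X \<in> phi X)"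

definition de_bruijn :: "('v set \<Rightarrow> 'v set) \<Rightarrow> ('v set \<Rightarrow> 'v) \<Rightarrow> bool" where
  "de_bruijn phi fr \<longleftrightarrow> (\<forall>X. finite X \<longrightarrow> phi X = {fr X})"

section \<open>Raw syntax\<close>

datatype ('v,'f) trm = Var 'v | App 'f "('v,'f) trm list"
datatype ('v,'f,'t) pty = TyApp 't "('v,'f) trm list"
type_synonym ('v,'f,'t) ctx = "('v \<times> ('v,'f,'t) pty) list"

datatype ('v,'f,'t,'p) fm =
    Atom 'p "('v,'f) trm list" | FBot | FTop
  | FConj "('v,'f,'t,'p) fm" "('v,'f,'t,'p) fm"
  | FDisj "('v,'f,'t,'p) fm" "('v,'f,'t,'p) fm"
  | FImp "('v,'f,'t,'p) fm" "('v,'f,'t,'p) fm"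
  | FAll 'v "('v,'f,'t) pty" "('v,'f,'t,'p) fm"
  | FEx 'v "('v,'f,'t) pty" "('v,'f,'t,'p) fm"

fun vars_trm :: "('v,'f) trm \<Rightarrow> 'v set" where
  "vars_trm (Var x) = {x}"
| "vars_trm (App f ts) = (\<Union>t\<in>set ts. vars_trm t)"

fun vars_typ :: "('v,'f,'t) pty \<Rightarrow> 'v set" where
  "vars_typ (TyApp S ts) = (\<Union>t\<in>set ts. vars_trm t)"

definition OV :: "('v,'f,'t) ctx \<Rightarrow> 'v list" where
  "OV G = map fst G"

definition vars_ctx :: "('v,'f,'t) ctx \<Rightarrow> 'v set" where
  "vars_ctx G = set (OV G) \<union> (\<Union>A\<in>set (map snd G). vars_typ A)"

fun subst_trm :: "('v \<Rightarrow> ('v,'f) trm) \<Rightarrow> ('v,'f) trm \<Rightarrow> ('v,'f) trm" where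
  "subst_trm s (Var x) = s x"
| "subst_trm s (App f ts) = App f (map (subst_trm s) ts)"

fun subst_typ :: "('v \<Rightarrow> ('v,'f) trm) \<Rightarrow> ('v,'f,'t) pty \<Rightarrow> ('v,'f,'t) pty" where
  "subst_typ s (TyApp S ts) = TyApp S (map (subst_trm s) ts)"

definition smap :: "'v list \<Rightarrow> ('v,'f) trm list \<Rightarrow> 'v \<Rightarrow> ('v,'f) trm" where
  "smap xs as y = (case map_of (zip xs as) y of Some a \<Rightarrow> a | None \<Rightarrow> Var y)"

text \<open>Selection as_is (indices are 0-based here).\<close>
definition sel :: "'a list \<Rightarrow> nat list \<Rightarrow> 'a list" where
  "sel as is = map (\<lambda>i. as ! i) is"

definition precontext :: "('v set \<Rightarrow> 'v set) \<Rightarrow> ('v,'f,'t) ctx \<Rightarrow> bool" where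
  "precontext phi G \<longleftrightarrow> (\<forall>k<length G.
     fst (G ! k) \<in> phi (set (take k (OV G))) \<and> vars_typ (snd (G ! k)) \<subseteq> set (take k (OV G)))"

definition TV :: "('v,'f,'t) ctx \<Rightarrow> 'v set" where
  "TV G = foldl (\<lambda>S (x, A). (S - vars_typ A) \<union> {x}) {} G"

definition determining :: "('v,'f,'t) ctx \<Rightarrow> nat list \<Rightarrow> bool" where
  "determining G is \<longleftrightarrow> sorted_wrt (<) is \<and> (\<forall>i\<in>set is. i < length G) \<and>
     TV G \<subseteq> {fst (G ! i) | i. i \<in> set is}"

section \<open>Judgements and signatures\<close>

datatype ('v,'f,'t) judg =
    IsCtx "('v,'f,'t) ctx"
  | IsType "('v,'f,'t) ctx" "('v,'f,'t) pty"
  | HasType "('v,'f,'t) ctx" "('v,'f) trm" "('v,'f,'t) pty"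

text \<open>A signature \<Sigma> is given by partial maps on the type and function symbols
  (so each symbol is declared at most once): TD S = Some (G, is) is the declaration (G,S,is),
  FD f = Some (G, is, U) is the declaration (G,f,is,U).\<close>

inductive_set J :: "('v set \<Rightarrow> 'v set) \<Rightarrow> ('t \<Rightarrow> (('v,'f,'t) ctx \<times> nat list) option)
    \<Rightarrow> ('f \<Rightarrow> (('v,'f,'t) ctx \<times> nat list \<times> ('v,'f,'t) pty) option) \<Rightarrow> ('v,'f,'t) judg set"
  for phi TD FD where
  R1: "IsCtx [] \<in> J phi TD FD"
| R2: "IsCtx G \<in> J phi TD FD \<Longrightarrow> IsType G A \<in> J phi TD FD \<Longrightarrow> x \<in> phi (vars_ctx G)
       \<Longrightarrow> IsCtx (G @ [(x, A)]) \<in> J phi TD FD"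
| R3: "IsCtx G \<in> J phi TD FD \<Longrightarrow> i < length G
       \<Longrightarrow> HasType G (Var (fst (G ! i))) (snd (G ! i)) \<in> J phi TD FD"
| R4: "TD S = Some (G, is) \<Longrightarrow>
       IsCtx D \<in> J phi TD FD \<Longrightarrow> IsCtx G \<in> J phi TD FD \<Longrightarrow> length as = length G \<Longrightarrow>
       (\<forall>k<length G. HasType D (as ! k)
          (subst_typ (smap (take k (OV G)) (take k as)) (snd (G ! k))) \<in> J phi TD FD) \<Longrightarrow>
       IsType D (TyApp S (sel as is)) \<in> J phi TD FD"
| R5: "FD f = Some (G, is, U) \<Longrightarrow>
       IsCtx D \<in> J phi TD FD \<Longrightarrow> IsCtx G \<in> J phi TD FD \<Longrightarrow> length as = length G \<Longrightarrow>
       (\<forall>k<length G. HasType D (as ! k)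
          (subst_typ (smap (take k (OV G)) (take k as)) (snd (G ! k))) \<in> J phi TD FD) \<Longrightarrow>
       IsType D (subst_typ (smap (OV G) as) U) \<in> J phi TD FD \<Longrightarrow>
       HasType D (App f (sel as is)) (subst_typ (smap (OV G) as) U) \<in> J phi TD FD"

definition morJ where
  "morJ phi TD FD D G as \<longleftrightarrow>
     IsCtx D \<in> J phi TD FD \<and> IsCtx G \<in> J phi TD FD \<and> length as = length G \<and>
     (\<forall>k<length G. HasType D (as ! k)
          (subst_typ (smap (take k (OV G)) (take k as)) (snd (G ! k))) \<in> J phi TD FD)"

definition is_signature where
  "is_signature phi TD FD \<longleftrightarrow>
     (\<forall>S G is. TD S = Some (G, is) \<longrightarrow>
        precontext phi G \<and> determining G is \<and> IsCtx G \<in> J phi TD FD) \<and>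
     (\<forall>f G is U. FD f = Some (G, is, U) \<longrightarrow>
        precontext phi G \<and> determining G is \<and> vars_typ U \<subseteq> vars_ctx G \<and>
        IsCtx G \<in> J phi TD FD \<and> IsType G U \<in> J phi TD FD)"

text \<open>Predicate signature \<Pi>: PD R = Some (G, is) is the declaration (G,is,R).\<close>
definition is_pred_signature where
  "is_pred_signature phi TD FD PD \<longleftrightarrow>
     (\<forall>R G is. PD R = Some (G, is) \<longrightarrow> IsCtx G \<in> J phi TD FD \<and> determining G is)"

section \<open>Formulas, substitution, theorems\<close>

inductive_set Form for phi TD FD
  and PD :: "'p \<Rightarrow> (('v,'f,'t) ctx \<times> nat list) option" where
  atom: "PD R = Some (G, is) \<Longrightarrow> morJ phi TD FD D G as \<Longrightarrow> (D, Atom R (sel as is)) \<in> Form phi TD FD PD"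
| bot: "IsCtx G \<in> J phi TD FD \<Longrightarrow> (G, FBot) \<in> Form phi TD FD PD"
| top: "IsCtx G \<in> J phi TD FD \<Longrightarrow> (G, FTop) \<in> Form phi TD FD PD"
| conj: "(G, \<phi>) \<in> Form phi TD FD PD \<Longrightarrow> (G, \<psi>) \<in> Form phi TD FD PD \<Longrightarrow> (G, FConj \<phi> \<psi>) \<in> Form phi TD FD PD"
| disj: "(G, \<phi>) \<in> Form phi TD FD PD \<Longrightarrow> (G, \<psi>) \<in> Form phi TD FD PD \<Longrightarrow> (G, FDisj \<phi> \<psi>) \<in> Form phi TD FD PD"
| imp: "(G, \<phi>) \<in> Form phi TD FD PD \<Longrightarrow> (G, \<psi>) \<in> Form phi TD FD PD \<Longrightarrow> (G, FImp \<phi> \<psi>) \<in> Form phi TD FD PD"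
| all: "(G @ [(x, A)], \<phi>) \<in> Form phi TD FD PD \<Longrightarrow> IsType G A \<in> J phi TD FD \<Longrightarrow> (G, FAll x A \<phi>) \<in> Form phi TD FD PD"
| ex: "(G @ [(x, A)], \<phi>) \<in> Form phi TD FD PD \<Longrightarrow> IsType G A \<in> J phi TD FD \<Longrightarrow> (G, FEx x A \<phi>) \<in> Form phi TD FD PD"

fun fsub :: "('v set \<Rightarrow> 'v) \<Rightarrow> ('v,'f,'t) ctx \<Rightarrow> ('v,'f,'t) ctx \<Rightarrow> ('v,'f) trm list
    \<Rightarrow> ('v,'f,'t,'p) fm \<Rightarrow> ('v,'f,'t,'p) fm" where
  "fsub fr D G as (Atom R ts) = Atom R (map (subst_trm (smap (OV G) as)) ts)"
| "fsub fr D G as FBot = FBot"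
| "fsub fr D G as FTop = FTop"
| "fsub fr D G as (FConj \<phi> \<psi>) = FConj (fsub fr D G as \<phi>) (fsub fr D G as \<psi>)"
| "fsub fr D G as (FDisj \<phi> \<psi>) = FDisj (fsub fr D G as \<phi>) (fsub fr D G as \<psi>)"
| "fsub fr D G as (FImp \<phi> \<psi>) = FImp (fsub fr D G as \<phi>) (fsub fr D G as \<psi>)"
| "fsub fr D G as (FAll x A \<theta>) =
     (let y = fr (vars_ctx D); A' = subst_typ (smap (OV G) as) A
      in FAll y A' (fsub fr (D @ [(y, A')]) (G @ [(x, A)]) (as @ [Var y]) \<theta>))"
| "fsub fr D G as (FEx x A \<theta>) =
     (let y = fr (vars_ctx D); A' = subst_typ (smap (OV G) as) A
      in FEx y A' (fsub fr (D @ [(y, A')]) (G @ [(x, A)]) (as @ [Var y]) \<theta>))"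

definition fsub_p where
  "fsub_p fr G x A \<phi> = fsub fr (G @ [(x, A)]) G (map Var (OV G)) \<phi>"

definition is_theory where
  "is_theory phi TD FD PD T \<longleftrightarrow>
     (\<forall>(G, \<phi>, \<psi>)\<in>T. (G, \<phi>) \<in> Form phi TD FD PD \<and> (G, \<psi>) \<in> Form phi TD FD PD)"

text \<open>Sequents are triples (G, \<phi>, \<psi>) for \<phi> \<Rightarrow>_G \<psi>.  Each rule is applied only
  when its conclusion is a sequent (Thm is a set of sequents).\<close>
inductive_set Thm for phi fr TD FD PD
  and T :: "(('v,'f,'t) ctx \<times> ('v,'f,'t,'p) fm \<times> ('v,'f,'t,'p) fm) set" where
  ax: "s \<in> T \<Longrightarrow> s \<in> Thm phi fr TD FD PD T"
| refl: "(G, \<phi>) \<in> Form phi TD FD PD \<Longrightarrow> (G, \<phi>, \<phi>) \<in> Thm phi fr TD FD PD T"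
| cut: "(G, \<phi>, \<theta>) \<in> Thm phi fr TD FD PD T \<Longrightarrow> (G, \<theta>, \<psi>) \<in> Thm phi fr TD FD PD T
        \<Longrightarrow> (G, \<phi>, \<psi>) \<in> Thm phi fr TD FD PD T"
| conjE1: "(G, FConj \<theta> \<psi>) \<in> Form phi TD FD PD \<Longrightarrow> (G, \<theta>) \<in> Form phi TD FD PD
        \<Longrightarrow> (G, FConj \<theta> \<psi>, \<theta>) \<in> Thm phi fr TD FD PD T"
| conjE2: "(G, FConj \<theta> \<psi>) \<in> Form phi TD FD PD \<Longrightarrow> (G, \<psi>) \<in> Form phi TD FD PD
        \<Longrightarrow> (G, FConj \<theta> \<psi>, \<psi>) \<in> Thm phi fr TD FD PD T"
| conjI: "(G, \<phi>, \<theta>) \<in> Thm phi fr TD FD PD T \<Longrightarrow> (G, \<phi>, \<psi>) \<in> Thm phi fr TD FD PD T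
        \<Longrightarrow> (G, \<phi>, FConj \<theta> \<psi>) \<in> Thm phi fr TD FD PD T"
| topI: "(G, \<phi>) \<in> Form phi TD FD PD \<Longrightarrow> (G, FTop) \<in> Form phi TD FD PD
        \<Longrightarrow> (G, \<phi>, FTop) \<in> Thm phi fr TD FD PD T"
| disjI1: "(G, \<theta>) \<in> Form phi TD FD PD \<Longrightarrow> (G, FDisj \<theta> \<psi>) \<in> Form phi TD FD PD
        \<Longrightarrow> (G, \<theta>, FDisj \<theta> \<psi>) \<in> Thm phi fr TD FD PD T"
| disjI2: "(G, \<psi>) \<in> Form phi TD FD PD \<Longrightarrow> (G, FDisj \<theta> \<psi>) \<in> Form phi TD FD PD
        \<Longrightarrow> (G, \<psi>, FDisj \<theta> \<psi>) \<in> Thm phi fr TD FD PD T"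
| disjE: "(G, \<theta>, \<phi>) \<in> Thm phi fr TD FD PD T \<Longrightarrow> (G, \<psi>, \<phi>) \<in> Thm phi fr TD FD PD T
        \<Longrightarrow> (G, FDisj \<theta> \<psi>, \<phi>) \<in> Thm phi fr TD FD PD T"
| botE: "(G, FBot) \<in> Form phi TD FD PD \<Longrightarrow> (G, \<phi>) \<in> Form phi TD FD PD
        \<Longrightarrow> (G, FBot, \<phi>) \<in> Thm phi fr TD FD PD T"
| impI: "(G, FConj \<theta> \<psi>, \<phi>) \<in> Thm phi fr TD FD PD T \<Longrightarrow>
        (G, \<theta>) \<in> Form phi TD FD PD \<Longrightarrow> (G, FImp \<psi> \<phi>) \<in> Form phi TD FD PD
        \<Longrightarrow> (G, \<theta>, FImp \<psi> \<phi>) \<in> Thm phi fr TD FD PD T"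
| impE: "(G, \<theta>, FImp \<psi> \<phi>) \<in> Thm phi fr TD FD PD T \<Longrightarrow>
        (G, FConj \<theta> \<psi>) \<in> Form phi TD FD PD \<Longrightarrow> (G, \<phi>) \<in> Form phi TD FD PD
        \<Longrightarrow> (G, FConj \<theta> \<psi>, \<phi>) \<in> Thm phi fr TD FD PD T"
| allI: "(G @ [(x, A)], fsub_p fr G x A \<phi>, \<psi>) \<in> Thm phi fr TD FD PD T \<Longrightarrow>
        (G, \<phi>) \<in> Form phi TD FD PD \<Longrightarrow> (G, FAll x A \<psi>) \<in> Form phi TD FD PD
        \<Longrightarrow> (G, \<phi>, FAll x A \<psi>) \<in> Thm phi fr TD FD PD T"
| allE: "(G, \<phi>, FAll x A \<psi>) \<in> Thm phi fr TD FD PD T \<Longrightarrow>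
        (G @ [(x, A)], fsub_p fr G x A \<phi>) \<in> Form phi TD FD PD \<Longrightarrow> (G @ [(x, A)], \<psi>) \<in> Form phi TD FD PD
        \<Longrightarrow> (G @ [(x, A)], fsub_p fr G x A \<phi>, \<psi>) \<in> Thm phi fr TD FD PD T"
| exE: "(G @ [(x, A)], \<psi>, fsub_p fr G x A \<phi>) \<in> Thm phi fr TD FD PD T \<Longrightarrow>
        (G, FEx x A \<psi>) \<in> Form phi TD FD PD \<Longrightarrow> (G, \<phi>) \<in> Form phi TD FD PD
        \<Longrightarrow> (G, FEx x A \<psi>, \<phi>) \<in> Thm phi fr TD FD PD T"
| exI: "(G, FEx x A \<psi>, \<phi>) \<in> Thm phi fr TD FD PD T \<Longrightarrow>
        (G @ [(x, A)], \<psi>) \<in> Form phi TD FD PD \<Longrightarrow> (G @ [(x, A)], fsub_p fr G x A \<phi>) \<in> Form phi TD FD PD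
        \<Longrightarrow> (G @ [(x, A)], \<psi>, fsub_p fr G x A \<phi>) \<in> Thm phi fr TD FD PD T"
| subst: "(G, \<phi>, \<psi>) \<in> Thm phi fr TD FD PD T \<Longrightarrow> morJ phi TD FD D G as \<Longrightarrow>
        (D, fsub fr D G as \<phi>) \<in> Form phi TD FD PD \<Longrightarrow> (D, fsub fr D G as \<psi>) \<in> Form phi TD FD PD
        \<Longrightarrow> (D, fsub fr D G as \<phi>, fsub fr D G as \<psi>) \<in> Thm phi fr TD FD PD T"

section \<open>The term-model cwf F_\<Sigma> and the Lindenbaum--Tarski structure\<close>

type_synonym ('v,'f,'t) mor = "('v,'f,'t) ctx \<times> ('v,'f,'t) ctx \<times> ('v,'f) trm list"
type_synonym ('v,'f,'t) ty = "('v,'f,'t) ctx \<times> ('v,'f,'t) pty"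
type_synonym ('v,'f,'t) tm = "('v,'f,'t) ty \<times> ('v,'f) trm"

definition fresh :: "('v set \<Rightarrow> 'v) \<Rightarrow> ('v,'f,'t) ctx \<Rightarrow> 'v" where
  "fresh fr G = fr (vars_ctx G)"

definition ctx_ext :: "('v set \<Rightarrow> 'v) \<Rightarrow> ('v,'f,'t) ty \<Rightarrow> ('v,'f,'t) ctx" where
  "ctx_ext fr A = (case A of (G, S) \<Rightarrow> G @ [(fresh fr G, S)])"

definition FSigma ::
  "('v set \<Rightarrow> 'v set) \<Rightarrow> ('v set \<Rightarrow> 'v) \<Rightarrow> ('t \<Rightarrow> (('v,'f,'t) ctx \<times> nat list) option)
   \<Rightarrow> ('f \<Rightarrow> (('v,'f,'t) ctx \<times> nat list \<times> ('v,'f,'t) pty) option)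
   \<Rightarrow> (('v,'f,'t) ctx, ('v,'f,'t) mor, ('v,'f,'t) ty, ('v,'f,'t) tm) cwf_ops" where
  "FSigma phi fr TD FD = \<lparr>
     Ob = {G. IsCtx G \<in> J phi TD FD},
     Hom = (\<lambda>D G. {(D, G, as) | as. morJ phi TD FD D G as}),
     comp = (\<lambda>g f. case f of (D, G, as) \<Rightarrow> case g of (_, E, bs) \<Rightarrow>
                (D, E, map (subst_trm (smap (OV G) as)) bs)),
     ident = (\<lambda>G. (G, G, map Var (OV G))),
     termo = [],
     Ty = (\<lambda>G. {(G, A) | A. IsType G A \<in> J phi TD FD}),
     tsub = (\<lambda>A f. case A of (_, B) \<Rightarrow> case f of (D, G, as) \<Rightarrow>
                (D, subst_typ (smap (OV G) as) B)),
     ext = (\<lambda>_ A. ctx_ext fr A),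
     pp = (\<lambda>_ A. (ctx_ext fr A, fst A, map Var (OV (fst A)))),
     Tm = (\<lambda>G A. {(A, a) | a. fst A = G \<and> HasType G a (snd A) \<in> J phi TD FD}),
     msub = (\<lambda>a f. case a of ((_, B), t) \<Rightarrow> case f of (D, G, as) \<Rightarrow>
                ((D, subst_typ (smap (OV G) as) B), subst_trm (smap (OV G) as) t)),
     vv = (\<lambda>_ A. ((ctx_ext fr A, snd A), Var (fresh fr (fst A)))),
     pair = (\<lambda>_ A f a. case f of (D, _, ss) \<Rightarrow> (D, ctx_ext fr A, ss @ [snd a]))
   \<rparr>"

definition LT ::
  "('v set \<Rightarrow> 'v set) \<Rightarrow> ('v set \<Rightarrow> 'v) \<Rightarrow> ('t \<Rightarrow> (('v,'f,'t) ctx \<times> nat list) option)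
   \<Rightarrow> ('f \<Rightarrow> (('v,'f,'t) ctx \<times> nat list \<times> ('v,'f,'t) pty) option)
   \<Rightarrow> ('p \<Rightarrow> (('v,'f,'t) ctx \<times> nat list) option)
   \<Rightarrow> (('v,'f,'t) ctx \<times> ('v,'f,'t,'p) fm \<times> ('v,'f,'t,'p) fm) set
   \<Rightarrow> (('v,'f,'t) ctx, ('v,'f,'t) mor, ('v,'f,'t) ty, ('v,'f,'t) ctx \<times> ('v,'f,'t,'p) fm) hdoc_ops" where
  "LT phi fr TD FD PD T = \<lparr>
     Pr = (\<lambda>G. {(G, \<phi>) | \<phi>. (G, \<phi>) \<in> Form phi TD FD PD}),
     hle = (\<lambda>_ P Q. (fst P, snd P, snd Q) \<in> Thm phi fr TD FD PD T),
     htop = (\<lambda>G. (G, FTop)),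
     hbot = (\<lambda>G. (G, FBot)),
     hand = (\<lambda>_ P Q. (fst P, FConj (snd P) (snd Q))),
     hor = (\<lambda>_ P Q. (fst P, FDisj (snd P) (snd Q))),
     himp = (\<lambda>_ P Q. (fst P, FImp (snd P) (snd Q))),
     prsub = (\<lambda>f P. case f of (D, G, as) \<Rightarrow> (D, fsub fr D G as (snd P))),
     hall = (\<lambda>_ A R. (fst A, FAll (fst (last (fst R))) (snd A) (snd R))),
     hex = (\<lambda>_ A R. (fst A, FEx (fst (last (fst R))) (snd A) (snd R)))
   \<rparr>"

end

theory Submission
  imports Defs
begin

text \<open>
  Substituting along a context morphism preserves derivability of judgements, and substitutions
  compose like the morphisms themselves; this makes the term model a category with families,
  context extension adding the canonical fresh variable fr(V(G)). Capture-avoiding substitution of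
  formulas is functorial for the same reason, except at identities: there it renames every bound
  variable to the canonical fresh one, which is harmless exactly because of the de Bruijn property.
  The propositional rules say that formulas modulo provability form a Heyting prealgebra, the
  substitution rule makes reindexing a Heyting morphism, the quantifier rules are literally the
  adjunctions of the quantifiers with weakening, and Beck--Chevalley is the clause defining
  substitution under a binder. The universal model property holds because the order is provability.
\<close>

section \<open>Simultaneous substitution\<close>

lemma OV_simps [simp]:
  "OV [] = []" "OV (p # G) = fst p # OV G" "OV (G @ H) = OV G @ OV H"
  "length (OV G) = length G" "i < length G \<Longrightarrow> OV G ! i = fst (G ! i)"
  by (simp_all add: OV_def)

lemma subst_trm_Var [simp]: "subst_trm Var = id"
proof
  show "subst_trm Var t = id t" for t :: "('v, 'f) trm"
    by (induction t) (auto simp: map_idI)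
qed

lemma subst_typ_Var [simp]: "subst_typ Var A = A"
  by (cases A) simp

lemma subst_trm_o_Var [simp]: "subst_trm s \<circ> Var = s"
  by auto

lemma smap_map_Var [simp]: "smap xs (map Var xs) = Var"
proof
  show "smap xs (map Var xs) y = Var y" for y
    unfolding smap_def by (induction xs) auto
qed

lemma smap_map:
  "length xs = length as \<Longrightarrow> y \<in> set xs \<Longrightarrow> smap xs (map f as) y = f (smap xs as y)"
  unfolding smap_def
proof (induction xs arbitrary: as)
  case (Cons x xs) then show ?case by (cases as) auto
qed simp

lemma smap_append_left:
  "length xs = length as \<Longrightarrow> y \<in> set xs \<Longrightarrow> smap (xs @ ys) (as @ bs) y = smap xs as y"
  unfolding smap_def
proof (induction xs arbitrary: as)
  case (Cons x xs) then show ?case by (cases as) auto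
qed simp

lemma map_smap_append_left:
  "length xs = length as \<Longrightarrow> map (smap (xs @ ys) (as @ bs)) xs = map (smap xs as) xs"
  by (simp add: smap_append_left)

lemma smap_take:
  assumes "length xs = length as" and "y \<in> set (take k xs)"
  shows "smap (take k xs) (take k as) y = smap xs as y"
  using smap_append_left[of "take k xs" "take k as" y "drop k xs" "drop k as"] assms by simp

lemma smap_snoc:
  "length xs = length as \<Longrightarrow> y \<notin> set xs \<Longrightarrow> smap (xs @ [y]) (as @ [a]) y = a"
  unfolding smap_def
proof (induction xs arbitrary: as)
  case (Cons x xs) then show ?case by (cases as) auto
qed simp

lemma smap_nth:
  "distinct xs \<Longrightarrow> length xs = length as \<Longrightarrow> i < length xs \<Longrightarrow> smap xs as (xs ! i) = as ! i"
  by (simp add: smap_def map_of_zip_nth)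

lemma map_smap_self: "distinct xs \<Longrightarrow> length xs = length as \<Longrightarrow> map (smap xs as) xs = as"
  by (rule nth_equalityI) (auto simp: smap_nth)

lemma subst_trm_subst_trm: "subst_trm s (subst_trm t u) = subst_trm (\<lambda>x. subst_trm s (t x)) u"
  by (induction u) auto

lemma subst_trm_cong: "(\<And>x. x \<in> vars_trm u \<Longrightarrow> s x = t x) \<Longrightarrow> subst_trm s u = subst_trm t u"
  by (induction u) auto

lemma subst_typ_cong: "(\<And>x. x \<in> vars_typ A \<Longrightarrow> s x = t x) \<Longrightarrow> subst_typ s A = subst_typ t A"
  by (cases A) (auto intro: subst_trm_cong)

lemma subst_trm_smap:
  "vars_trm u \<subseteq> set xs \<Longrightarrow> length xs = length as \<Longrightarrow>
   subst_trm s (subst_trm (smap xs as) u) = subst_trm (smap xs (map (subst_trm s) as)) u"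
  by (auto simp: subst_trm_subst_trm smap_map intro!: subst_trm_cong)

lemma subst_typ_smap:
  "vars_typ A \<subseteq> set xs \<Longrightarrow> length xs = length as \<Longrightarrow>
   subst_typ s (subst_typ (smap xs as) A) = subst_typ (smap xs (map (subst_trm s) as)) A"
  by (cases A) (auto intro!: subst_trm_smap)

lemma subst_typ_smap_append_left:
  "vars_typ B \<subseteq> set xs \<Longrightarrow> length xs = length as \<Longrightarrow>
   subst_typ (smap (xs @ ys) (as @ bs)) B = subst_typ (smap xs as) B"
  by (auto intro!: subst_typ_cong smap_append_left)

lemma finite_vars_ctx [simp]: "finite (vars_ctx G)"
proof -
  have "finite (vars_trm t)" for t :: "('v, 'f) trm"
    by (induction t) auto
  then have "finite (vars_typ A)" for A :: "('v, 'f, 't) pty"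
    by (cases A) auto
  then show ?thesis
    by (auto simp: vars_ctx_def OV_def)
qed

lemma OV_sub_vars_ctx: "set (OV G) \<subseteq> vars_ctx G"
  by (auto simp: vars_ctx_def)

section \<open>Derivable judgements and context morphisms\<close>

fun judg_ctx :: "('v,'f,'t) judg \<Rightarrow> ('v,'f,'t) ctx" where
  "judg_ctx (IsCtx G) = G"
| "judg_ctx (IsType G A) = G"
| "judg_ctx (HasType G t A) = G"

fun judg_subst :: "('v,'f,'t) ctx \<Rightarrow> ('v,'f) trm list \<Rightarrow> ('v,'f,'t) judg \<Rightarrow> ('v,'f,'t) judg" where
  "judg_subst D as (IsCtx G) = IsCtx D"
| "judg_subst D as (IsType G A) = IsType D (subst_typ (smap (OV G) as) A)"
| "judg_subst D as (HasType G t A) =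
     HasType D (subst_trm (smap (OV G) as) t) (subst_typ (smap (OV G) as) A)"

fun wf_judg :: "('v,'f,'t) judg \<Rightarrow> bool" where
  "wf_judg (IsCtx G) \<longleftrightarrow>
     distinct (OV G) \<and> (\<forall>i<length G. vars_typ (snd (G ! i)) \<subseteq> set (take i (OV G)))"
| "wf_judg (IsType G A) \<longleftrightarrow> vars_typ A \<subseteq> set (OV G)"
| "wf_judg (HasType G t A) \<longleftrightarrow> vars_trm t \<subseteq> set (OV G) \<and> vars_typ A \<subseteq> set (OV G)"

lemma IsCtx_judg_ctx: "j \<in> J phi TD FD \<Longrightarrow> IsCtx (judg_ctx j) \<in> J phi TD FD"
  by (induction rule: J.induct) (auto intro: J.intros)

lemma IsCtx_snocD:
  "IsCtx (G @ [(x, A)]) \<in> J phi TD FD \<Longrightarrow>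
   IsCtx G \<in> J phi TD FD \<and> IsType G A \<in> J phi TD FD \<and> x \<in> phi (vars_ctx G)"
  by (erule J.cases) auto

lemma vars_sel_subset:
  "\<forall>i\<in>set is. i < length as \<Longrightarrow> (\<And>k. k < length as \<Longrightarrow> vars_trm (as ! k) \<subseteq> X) \<Longrightarrow>
   (\<Union>t\<in>set (sel as is). vars_trm t) \<subseteq> X"
  by (auto simp: sel_def)

lemma map_sel: "\<forall>i\<in>set is. i < length as \<Longrightarrow> map f (sel as is) = sel (map f as) is"
  by (auto simp: sel_def)

lemma fresh_notin_OV: "var_system phi fr \<Longrightarrow> y \<in> phi (vars_ctx D) \<Longrightarrow> y \<notin> set (OV D)"
  using OV_sub_vars_ctx[of D] finite_vars_ctx[of D] unfolding var_system_def by blast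

lemma fr_in_phi: "var_system phi fr \<Longrightarrow> fr (vars_ctx D) \<in> phi (vars_ctx D)"
  by (simp add: var_system_def)

context
  fixes phi :: "'v set \<Rightarrow> 'v set" and fr :: "'v set \<Rightarrow> 'v"
    and TD :: "'t \<Rightarrow> (('v,'f,'t) ctx \<times> nat list) option"
    and FD :: "'f \<Rightarrow> (('v,'f,'t) ctx \<times> nat list \<times> ('v,'f,'t) pty) option"
  assumes VS: "var_system phi fr" and SIG: "is_signature phi TD FD"
begin

abbreviation derivable :: "('v,'f,'t) judg \<Rightarrow> bool" where
  "derivable j \<equiv> j \<in> J phi TD FD"

lemma TD_indices_bounded:
    "TD S = Some (G, is) \<Longrightarrow> length as = length G \<Longrightarrow> \<forall>i\<in>set is. i < length as"
  and FD_indices_bounded: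
    "FD f = Some (G, is, U) \<Longrightarrow> length as = length G \<Longrightarrow> \<forall>i\<in>set is. i < length as"
  using SIG by (auto simp: is_signature_def determining_def)

lemma derivable_wf_judg: "derivable j \<Longrightarrow> wf_judg j"
proof (induction rule: J.induct)
  case (R2 G A x)
  then have "x \<notin> set (OV G)"
    using fresh_notin_OV[OF VS] by blast
  with R2 show ?case
    by (auto simp: nth_append less_Suc_eq)
next
  case (R3 G i)
  then show ?case
    using set_take_subset[of i "OV G"] by (auto simp: OV_def)
next
  case (R4 S G "is" D as)
  then have "vars_trm (as ! k) \<subseteq> set (OV D)" if "k < length as" for k
    using that by auto
  with TD_indices_bounded[OF R4.hyps(1,4)] show ?case
    by (simp add: vars_sel_subset)
next
  case (R5 f G "is" U D as)
  then have "vars_trm (as ! k) \<subseteq> set (OV D)" if "k < length as" for k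
    using that by auto
  with R5.IH(4) FD_indices_bounded[OF R5.hyps(1,4)] show ?case
    by (simp add: vars_sel_subset)
qed simp

lemma IsCtx_wf:
  "derivable (IsCtx G) \<Longrightarrow> distinct (OV G) \<and> (\<forall>i<length G. vars_typ (snd (G ! i)) \<subseteq> set (take i (OV G)))"
  and IsType_wf: "derivable (IsType G A) \<Longrightarrow> vars_typ A \<subseteq> set (OV G)"
  and HasType_wf: "derivable (HasType G t A) \<Longrightarrow> vars_trm t \<subseteq> set (OV G) \<and> vars_typ A \<subseteq> set (OV G)"
  using derivable_wf_judg by fastforce+

text \<open>The type of the k-th variable of a derivable context only mentions the first k variables.\<close>

lemma subst_typ_take_ctx:
  assumes "derivable (IsCtx G)" and "length as = length G" and "k < length G"
  shows "subst_typ (smap (take k (OV G)) (take k as)) (snd (G ! k)) = subst_typ (smap (OV G) as) (snd (G ! k))"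
  using IsCtx_wf[OF assms(1)] assms(2,3) by (auto intro!: subst_typ_cong smap_take)

lemma morJ_map_subst_trm:
  assumes D: "derivable (IsCtx D)" and G: "derivable (IsCtx G)" and l: "length bs = length G"
    and args: "\<And>k. k < length G \<Longrightarrow> derivable (HasType D (subst_trm s (bs ! k))
        (subst_typ s (subst_typ (smap (take k (OV G)) (take k bs)) (snd (G ! k)))))"
  shows "morJ phi TD FD D G (map (subst_trm s) bs)"
  unfolding morJ_def
proof (intro HOL.conjI HOL.allI HOL.impI)
  fix k assume k: "k < length G"
  have "subst_typ s (subst_typ (smap (take k (OV G)) (take k bs)) (snd (G ! k)))
      = subst_typ (smap (take k (OV G)) (take k (map (subst_trm s) bs))) (snd (G ! k))"
    using IsCtx_wf[OF G] k l by (simp add: subst_typ_smap take_map)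
  with args[OF k] k l show "derivable (HasType D (map (subst_trm s) bs ! k)
      (subst_typ (smap (take k (OV G)) (take k (map (subst_trm s) bs))) (snd (G ! k))))"
    by simp
qed (use D G l in auto)

lemma J_subst: "derivable j \<Longrightarrow> morJ phi TD FD D (judg_ctx j) as \<Longrightarrow> derivable (judg_subst D as j)"
proof (induction arbitrary: D as rule: J.induct)
  case (R3 G i D as)
  then have "length as = length G" and "smap (OV G) as (fst (G ! i)) = as ! i"
    using IsCtx_wf[OF R3.hyps(1)] smap_nth[of "OV G" as i] by (auto simp: morJ_def)
  with R3 show ?case
    by (auto simp: morJ_def subst_typ_take_ctx)
next
  case (R4 S G "is" D0 bs D as)
  let ?s = "subst_trm (smap (OV D0) as)"
  have "morJ phi TD FD D G (map ?s bs)"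
    using R4 by (intro morJ_map_subst_trm) (auto simp: morJ_def)
  then have "derivable (IsType D (TyApp S (sel (map ?s bs) is)))"
    by (auto simp: morJ_def intro: J.R4[where TD=TD, OF R4.hyps(1)])
  then show ?case
    using TD_indices_bounded[OF R4.hyps(1,4)] by (simp add: map_sel)
next
  case (R5 f G "is" U D0 bs D as)
  let ?s = "subst_trm (smap (OV D0) as)"
  have U: "subst_typ (smap (OV D0) as) (subst_typ (smap (OV G) bs) U) = subst_typ (smap (OV G) (map ?s bs)) U"
    using SIG R5.hyps(1,4) IsType_wf by (auto simp: is_signature_def subst_typ_smap)
  have "morJ phi TD FD D G (map ?s bs)"
    using R5 by (intro morJ_map_subst_trm) (auto simp: morJ_def)
  moreover have "derivable (IsType D (subst_typ (smap (OV G) (map ?s bs)) U))"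
    using R5.IH(4)[of D as] R5.prems U by simp
  ultimately have "derivable (HasType D (App f (sel (map ?s bs) is)) (subst_typ (smap (OV G) (map ?s bs)) U))"
    by (auto simp: morJ_def intro: J.R5[where FD=FD, OF R5.hyps(1)])
  then show ?case
    using FD_indices_bounded[OF R5.hyps(1,4)] U by (simp add: map_sel)
qed (auto simp: morJ_def)

lemma IsType_subst:
  "derivable (IsType G B) \<Longrightarrow> morJ phi TD FD D G as \<Longrightarrow> derivable (IsType D (subst_typ (smap (OV G) as) B))"
  using J_subst[of "IsType G B"] by simp

lemma HasType_subst:
  "derivable (HasType G t B) \<Longrightarrow> morJ phi TD FD D G as \<Longrightarrow>
   derivable (HasType D (subst_trm (smap (OV G) as) t) (subst_typ (smap (OV G) as) B))"
  using J_subst[of "HasType G t B"] by simp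

lemma morJ_HasType:
  "morJ phi TD FD D G as \<Longrightarrow> k < length G \<Longrightarrow>
   derivable (HasType D (as ! k) (subst_typ (smap (OV G) as) (snd (G ! k))))"
  by (auto simp: morJ_def subst_typ_take_ctx)

lemma morJ_vars: "morJ phi TD FD D G as \<Longrightarrow> a \<in> set as \<Longrightarrow> vars_trm a \<subseteq> set (OV D)"
  by (auto simp: in_set_conv_nth morJ_def dest!: morJ_HasType HasType_wf)

lemma morJ_comp:
  assumes as: "morJ phi TD FD D G as" and bs: "morJ phi TD FD G E bs"
  shows "morJ phi TD FD D E (map (subst_trm (smap (OV G) as)) bs)"
proof (rule morJ_map_subst_trm)
  fix k assume "k < length E"
  then have "derivable (HasType G (bs ! k) (subst_typ (smap (take k (OV E)) (take k bs)) (snd (E ! k))))"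
    using bs by (simp add: morJ_def)
  from J_subst[OF this] as show "derivable (HasType D (subst_trm (smap (OV G) as) (bs ! k))
      (subst_typ (smap (OV G) as) (subst_typ (smap (take k (OV E)) (take k bs)) (snd (E ! k)))))"
    by simp
qed (use as bs in \<open>auto simp: morJ_def\<close>)

lemma morJ_id: "derivable (IsCtx G) \<Longrightarrow> morJ phi TD FD G G (map Var (OV G))"
  by (auto simp: morJ_def take_map intro: J.R3)

lemma morJ_proj:
  assumes GB: "derivable (IsCtx (G @ [(y, B)]))"
  shows "morJ phi TD FD (G @ [(y, B)]) G (map Var (OV G))"
proof -
  have "derivable (HasType (G @ [(y, B)]) (Var (fst (G ! k))) (snd (G ! k)))" if "k < length G" for k
    using J.R3[OF GB, of k] that by (simp add: nth_append)
  with IsCtx_snocD[OF GB] GB show ?thesis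
    by (auto simp: morJ_def take_map)
qed

lemma morJ_weaken:
  "morJ phi TD FD D G as \<Longrightarrow> derivable (IsCtx (D @ [(y, B)])) \<Longrightarrow> morJ phi TD FD (D @ [(y, B)]) G as"
  using morJ_comp[OF morJ_proj] by fastforce

lemma morJ_snoc:
  "morJ phi TD FD D G as \<Longrightarrow> derivable (IsCtx (G @ [(x, A)])) \<Longrightarrow>
   derivable (HasType D t (subst_typ (smap (OV G) as) A)) \<Longrightarrow> morJ phi TD FD D (G @ [(x, A)]) (as @ [t])"
  by (auto simp: morJ_def nth_append less_Suc_eq)

lemma HasType_last:
  assumes "derivable (IsCtx (G @ [(x, B)]))"
  shows "derivable (HasType (G @ [(x, B)]) (Var x) B)"
  using J.R3[OF assms, of "length G"] by simp

lemma morJ_lift: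
  assumes as: "morJ phi TD FD D G as" and GA: "derivable (IsCtx (G @ [(x, A)]))"
    and y: "y \<in> phi (vars_ctx D)"
  defines "A' \<equiv> subst_typ (smap (OV G) as) A"
  shows "morJ phi TD FD (D @ [(y, A')]) (G @ [(x, A)]) (as @ [Var y])"
proof -
  have "derivable (IsType D A')"
    using IsType_subst IsCtx_snocD[OF GA] as by (simp add: A'_def)
  then have DA: "derivable (IsCtx (D @ [(y, A')]))"
    using as y by (auto simp: morJ_def intro: J.R2)
  have "derivable (HasType (D @ [(y, A')]) (Var y) A')"
    using HasType_last[OF DA] .
  then show ?thesis
    using morJ_snoc[OF morJ_weaken[OF as DA] GA] by (simp add: A'_def)
qed

lemma morJ_length: "morJ phi TD FD D G as \<Longrightarrow> length as = length G"
  by (simp add: morJ_def)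

lemma morJ_map_smap_OV: "morJ phi TD FD D G as \<Longrightarrow> map (smap (OV G) as) (OV G) = as"
  using IsCtx_wf by (auto simp: morJ_def intro!: map_smap_self)

section \<open>The term model\<close>

lemma FSigma_simps:
  "G \<in> Ob (FSigma phi fr TD FD) \<longleftrightarrow> derivable (IsCtx G)"
  "f \<in> Hom (FSigma phi fr TD FD) D G \<longleftrightarrow> (\<exists>as. f = (D, G, as) \<and> morJ phi TD FD D G as)"
  "A \<in> Ty (FSigma phi fr TD FD) G \<longleftrightarrow> (\<exists>B. A = (G, B) \<and> derivable (IsType G B))"
  "a \<in> Tm (FSigma phi fr TD FD) G A \<longleftrightarrow> (\<exists>t. a = (A, t) \<and> fst A = G \<and> derivable (HasType G t (snd A)))"
  "comp (FSigma phi fr TD FD) (G', E, bs) (D, G, as) = (D, E, map (subst_trm (smap (OV G) as)) bs)"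
  "ident (FSigma phi fr TD FD) G = (G, G, map Var (OV G))"
  "termo (FSigma phi fr TD FD) = []"
  "tsub (FSigma phi fr TD FD) (G', B) (D, G, as) = (D, subst_typ (smap (OV G) as) B)"
  "ext (FSigma phi fr TD FD) G (G', B) = G' @ [(fr (vars_ctx G'), B)]"
  "pp (FSigma phi fr TD FD) G (G', B) = (G' @ [(fr (vars_ctx G'), B)], G', map Var (OV G'))"
  "msub (FSigma phi fr TD FD) ((G', B), t) (D, G, as) =
     ((D, subst_typ (smap (OV G) as) B), subst_trm (smap (OV G) as) t)"
  "vv (FSigma phi fr TD FD) G (G', B) = ((G' @ [(fr (vars_ctx G'), B)], B), Var (fr (vars_ctx G')))"
  "pair (FSigma phi fr TD FD) G (G', B) (D, G'', ss) a = (D, G' @ [(fr (vars_ctx G'), B)], ss @ [snd a])"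
  by (auto simp: FSigma_def ctx_ext_def fresh_def)

lemma subst_trm_smap_morJ:
  assumes bs: "morJ phi TD FD G D bs" and cs: "morJ phi TD FD D E cs" and c: "c \<in> set cs"
  shows "subst_trm (smap (OV D) (map (subst_trm s) bs)) c = subst_trm s (subst_trm (smap (OV D) bs) c)"
  using subst_trm_smap[OF morJ_vars[OF cs c]] morJ_length[OF bs] by simp

lemma IsCtx_ext:
  assumes "derivable (IsCtx G)" and "derivable (IsType G B)"
  shows "derivable (IsCtx (G @ [(fr (vars_ctx G), B)]))"
  using J.R2[OF assms fr_in_phi[OF VS]] .

lemma is_cwf_FSigma: "is_cwf (FSigma phi fr TD FD)"
  unfolding is_cwf_def
  by (intro HOL.conjI ballI;
      auto simp: FSigma_simps morJ_map_smap_OV morJ_length[symmetric] subst_trm_smap subst_typ_smap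
        subst_trm_smap_morJ morJ_def[where G = "[]"] J.R1 IsCtx_ext
        map_smap_append_left subst_typ_smap_append_left smap_snoc fresh_notin_OV[OF VS fr_in_phi[OF VS]]
      dest: IsType_wf HasType_wf morJ_map_smap_OV
      intro: morJ_id morJ_comp morJ_snoc[OF _ IsCtx_ext] morJ_proj[OF IsCtx_ext] HasType_last[OF IsCtx_ext]
        IsType_subst HasType_subst)

section \<open>The Lindenbaum--Tarski hyperdoctrine\<close>

context
  fixes PD :: "'p \<Rightarrow> (('v,'f,'t) ctx \<times> nat list) option"
  assumes PSIG: "is_pred_signature phi TD FD PD"
begin

abbreviation formula :: "('v,'f,'t) ctx \<Rightarrow> ('v,'f,'t,'p) fm \<Rightarrow> bool" where
  "formula G \<phi> \<equiv> (G, \<phi>) \<in> Form phi TD FD PD"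

lemma PD_indices_bounded: "PD R = Some (G, is) \<Longrightarrow> length as = length G \<Longrightarrow> \<forall>i\<in>set is. i < length as"
  using PSIG by (auto simp: is_pred_signature_def determining_def)

lemma Form_IsCtx: "formula G \<phi> \<Longrightarrow> derivable (IsCtx G)"
  by (induction rule: Form.induct) (auto simp: morJ_def dest: IsCtx_judg_ctx)

lemma Form_fsub: "formula G \<phi> \<Longrightarrow> morJ phi TD FD D G as \<Longrightarrow> formula D (fsub fr D G as \<phi>)"
proof (induction G \<phi> arbitrary: D as rule: Form.induct)
  case (atom R G0 "is" G bs D as)
  have "formula D (Atom R (sel (map (subst_trm (smap (OV G) as)) bs) is))"
    using atom morJ_comp by (blast intro: Form.atom)
  moreover have "\<forall>i\<in>set is. i < length bs"
    using PD_indices_bounded[OF atom.hyps(1), of bs] atom.hyps(2) by (simp add: morJ_def)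
  ultimately show ?case
    by (simp add: map_sel)
next
  case (all G x A \<theta> D as)
  let ?y = "fr (vars_ctx D)" and ?A = "subst_typ (smap (OV G) as) A"
  have "formula (D @ [(?y, ?A)]) (fsub fr (D @ [(?y, ?A)]) (G @ [(x, A)]) (as @ [Var ?y]) \<theta>)"
    using all morJ_lift Form_IsCtx fr_in_phi[OF VS] by blast
  moreover have "derivable (IsType D ?A)"
    using IsType_subst all by simp
  ultimately show ?case
    by (simp add: Let_def Form.all)
next
  case (ex G x A \<theta> D as)
  let ?y = "fr (vars_ctx D)" and ?A = "subst_typ (smap (OV G) as) A"
  have "formula (D @ [(?y, ?A)]) (fsub fr (D @ [(?y, ?A)]) (G @ [(x, A)]) (as @ [Var ?y]) \<theta>)"
    using ex morJ_lift Form_IsCtx fr_in_phi[OF VS] by blast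
  moreover have "derivable (IsType D ?A)"
    using IsType_subst ex by simp
  ultimately show ?case
    by (simp add: Let_def Form.ex)
qed (auto simp: morJ_def intro: Form.intros)

text \<open>This is where the de Bruijn property is needed: the bound variable of a formula is the
  only fresh variable, so renaming it to fr(V(G)) under the identity substitution changes nothing.\<close>

lemma fsub_ident:
  assumes DB: "de_bruijn phi fr"
  shows "formula G \<phi> \<Longrightarrow> fsub fr G G (map Var (OV G)) \<phi> = \<phi>"
proof (induction G \<phi> rule: Form.induct)
  case (all G x A \<theta>)
  then have "x = fr (vars_ctx G)"
    using IsCtx_snocD[OF Form_IsCtx] DB by (fastforce simp: de_bruijn_def)
  with all.IH show ?case
    by (simp add: Let_def)
next
  case (ex G x A \<theta>)
  then have "x = fr (vars_ctx G)"
    using IsCtx_snocD[OF Form_IsCtx] DB by (fastforce simp: de_bruijn_def)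
  with ex.IH show ?case
    by (simp add: Let_def)
qed (simp_all add: map_idI)

lemma map_subst_trm_lift:
  assumes bs: "morJ phi TD FD G E bs" and l: "length as = length G" and y: "y \<in> phi (vars_ctx G)"
  shows "map (subst_trm (smap (OV G @ [y]) (as @ [a]))) (bs @ [Var y]) = map (subst_trm (smap (OV G) as)) bs @ [a]"
proof -
  have "subst_trm (smap (OV G @ [y]) (as @ [a])) b = subst_trm (smap (OV G) as) b" if "b \<in> set bs" for b
    using morJ_vars[OF bs that] l by (auto intro!: subst_trm_cong smap_append_left)
  moreover have "smap (OV G @ [y]) (as @ [a]) y = a"
    using smap_snoc[of "OV G" as y a] l fresh_notin_OV[OF VS y] by simp
  ultimately show ?thesis
    by simp
qed

lemma fsub_comp:
  "formula E \<phi> \<Longrightarrow> morJ phi TD FD G E bs \<Longrightarrow> morJ phi TD FD D G as \<Longrightarrow>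
   fsub fr D E (map (subst_trm (smap (OV G) as)) bs) \<phi> = fsub fr D G as (fsub fr G E bs \<phi>)"
proof (induction E \<phi> arbitrary: D G as bs rule: Form.induct)
  case (atom R G0 "is" E cs D G as bs)
  have "set (sel cs is) \<subseteq> set cs"
    using PD_indices_bounded[OF atom.hyps(1), of cs] atom.hyps(2) by (auto simp: sel_def morJ_def)
  then have "vars_trm c \<subseteq> set (OV E)" if "c \<in> set (sel cs is)" for c
    using that morJ_vars[OF atom.hyps(2)] by blast
  with atom.prems(1) show ?case
    by (simp add: morJ_def subst_trm_smap)
next
  case (all E x A \<theta> D G as bs)
  let ?s = "subst_trm (smap (OV G) as)"
  let ?y = "fr (vars_ctx G)" and ?z = "fr (vars_ctx D)" and ?A = "subst_typ (smap (OV E) bs) A"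
  have A: "subst_typ (smap (OV E) (map ?s bs)) A = subst_typ (smap (OV G) as) ?A"
    using IsType_wf[OF all.hyps(2)] all.prems(1) by (simp add: morJ_def subst_typ_smap)
  have bs: "morJ phi TD FD (G @ [(?y, ?A)]) (E @ [(x, A)]) (bs @ [Var ?y])"
    using morJ_lift[OF all.prems(1) Form_IsCtx[OF all.hyps(1)] fr_in_phi[OF VS]] .
  then have "derivable (IsCtx (G @ [(?y, ?A)]))"
    by (simp add: morJ_def)
  from morJ_lift[OF all.prems(2) this fr_in_phi[OF VS]]
  have as: "morJ phi TD FD (D @ [(?z, subst_typ (smap (OV G) as) ?A)]) (G @ [(?y, ?A)]) (as @ [Var ?z])" .
  have lift: "map (subst_trm (smap (OV (G @ [(?y, ?A)])) (as @ [Var ?z]))) (bs @ [Var ?y]) = map ?s bs @ [Var ?z]"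
    using map_subst_trm_lift[OF all.prems(1) _ fr_in_phi[OF VS]] all.prems(2) by (simp add: morJ_def)
  show ?case
    using all.IH[OF bs as, unfolded lift] A by (simp add: Let_def)
next
  case (ex E x A \<theta> D G as bs)
  let ?s = "subst_trm (smap (OV G) as)"
  let ?y = "fr (vars_ctx G)" and ?z = "fr (vars_ctx D)" and ?A = "subst_typ (smap (OV E) bs) A"
  have A: "subst_typ (smap (OV E) (map ?s bs)) A = subst_typ (smap (OV G) as) ?A"
    using IsType_wf[OF ex.hyps(2)] ex.prems(1) by (simp add: morJ_def subst_typ_smap)
  have bs: "morJ phi TD FD (G @ [(?y, ?A)]) (E @ [(x, A)]) (bs @ [Var ?y])"
    using morJ_lift[OF ex.prems(1) Form_IsCtx[OF ex.hyps(1)] fr_in_phi[OF VS]] .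
  then have "derivable (IsCtx (G @ [(?y, ?A)]))"
    by (simp add: morJ_def)
  from morJ_lift[OF ex.prems(2) this fr_in_phi[OF VS]]
  have as: "morJ phi TD FD (D @ [(?z, subst_typ (smap (OV G) as) ?A)]) (G @ [(?y, ?A)]) (as @ [Var ?z])" .
  have lift: "map (subst_trm (smap (OV (G @ [(?y, ?A)])) (as @ [Var ?z]))) (bs @ [Var ?y]) = map ?s bs @ [Var ?z]"
    using map_subst_trm_lift[OF ex.prems(1) _ fr_in_phi[OF VS]] ex.prems(2) by (simp add: morJ_def)
  show ?case
    using ex.IH[OF bs as, unfolded lift] A by (simp add: Let_def)
qed simp_all

context
  fixes T :: "(('v,'f,'t) ctx \<times> ('v,'f,'t,'p) fm \<times> ('v,'f,'t,'p) fm) set"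
begin

abbreviation provable :: "('v,'f,'t) ctx \<Rightarrow> ('v,'f,'t,'p) fm \<Rightarrow> ('v,'f,'t,'p) fm \<Rightarrow> bool" where
  "provable G \<phi> \<psi> \<equiv> (G, \<phi>, \<psi>) \<in> Thm phi fr TD FD PD T"

lemma LT_simps:
  "P \<in> Pr (LT phi fr TD FD PD T) G \<longleftrightarrow> (\<exists>\<phi>. P = (G, \<phi>) \<and> formula G \<phi>)"
  "hle (LT phi fr TD FD PD T) G P Q \<longleftrightarrow> provable (fst P) (snd P) (snd Q)"
  "htop (LT phi fr TD FD PD T) G = (G, FTop)" "hbot (LT phi fr TD FD PD T) G = (G, FBot)"
  "hand (LT phi fr TD FD PD T) G P Q = (fst P, FConj (snd P) (snd Q))"
  "hor (LT phi fr TD FD PD T) G P Q = (fst P, FDisj (snd P) (snd Q))"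
  "himp (LT phi fr TD FD PD T) G P Q = (fst P, FImp (snd P) (snd Q))"
  "prsub (LT phi fr TD FD PD T) (D, G', as) P = (D, fsub fr D G' as (snd P))"
  "hall (LT phi fr TD FD PD T) G S P = (fst S, FAll (fst (last (fst P))) (snd S) (snd P))"
  "hex (LT phi fr TD FD PD T) G S P = (fst S, FEx (fst (last (fst P))) (snd S) (snd P))"
  by (auto simp: LT_def)

lemma provable_conj_iff:
  "formula G \<chi> \<Longrightarrow> formula G \<phi> \<Longrightarrow> formula G \<psi> \<Longrightarrow>
   provable G \<chi> (FConj \<phi> \<psi>) \<longleftrightarrow> provable G \<chi> \<phi> \<and> provable G \<chi> \<psi>"
  by (meson Form.conj Thm.conjE1 Thm.conjE2 Thm.conjI Thm.cut)

lemma provable_disj_iff: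
  "formula G \<chi> \<Longrightarrow> formula G \<phi> \<Longrightarrow> formula G \<psi> \<Longrightarrow>
   provable G (FDisj \<phi> \<psi>) \<chi> \<longleftrightarrow> provable G \<phi> \<chi> \<and> provable G \<psi> \<chi>"
  by (meson Form.disj Thm.disjI1 Thm.disjI2 Thm.disjE Thm.cut)

lemma provable_imp_iff:
  "formula G \<chi> \<Longrightarrow> formula G \<phi> \<Longrightarrow> formula G \<psi> \<Longrightarrow>
   provable G \<chi> (FImp \<phi> \<psi>) \<longleftrightarrow> provable G (FConj \<chi> \<phi>) \<psi>"
  by (meson Form.conj Form.imp Thm.impI Thm.impE)

lemma pr_heyting_LT: "derivable (IsCtx G) \<Longrightarrow> pr_heyting (LT phi fr TD FD PD T) G"
  unfolding pr_heyting_def heyting_prealg_def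
  by (auto simp: LT_simps provable_conj_iff provable_disj_iff provable_imp_iff
      intro: Form.intros Thm.refl Thm.cut Thm.botE[OF Form.bot] Thm.topI[OF _ Form.top])

lemma heyting_hom_fsub:
  "morJ phi TD FD D G as \<Longrightarrow> heyting_hom (LT phi fr TD FD PD T) G D (prsub (LT phi fr TD FD PD T) (D, G, as))"
  unfolding heyting_hom_def
  by (auto simp: LT_simps intro: Form_fsub Thm.subst[OF _ _ Form_fsub Form_fsub])

lemma formula_fsub_p:
  "formula G \<phi> \<Longrightarrow> derivable (IsCtx (G @ [(x, A)])) \<Longrightarrow> formula (G @ [(x, A)]) (fsub_p fr G x A \<phi>)"
  using Form_fsub morJ_proj by (simp add: fsub_p_def)

lemma provable_all_iff:
  assumes \<phi>: "formula G \<phi>" and \<theta>: "formula (G @ [(x, A)]) \<theta>"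
  shows "provable G \<phi> (FAll x A \<theta>) \<longleftrightarrow> provable (G @ [(x, A)]) (fsub_p fr G x A \<phi>) \<theta>"
proof -
  have "formula G (FAll x A \<theta>)"
    using \<theta> IsCtx_snocD[OF Form_IsCtx[OF \<theta>]] by (blast intro: Form.all)
  with \<phi> \<theta> formula_fsub_p[OF \<phi> Form_IsCtx[OF \<theta>]] show ?thesis
    by (blast intro: Thm.allI Thm.allE)
qed

lemma provable_ex_iff:
  assumes \<phi>: "formula G \<phi>" and \<theta>: "formula (G @ [(x, A)]) \<theta>"
  shows "provable G (FEx x A \<theta>) \<phi> \<longleftrightarrow> provable (G @ [(x, A)]) \<theta> (fsub_p fr G x A \<phi>)"
proof -
  have "formula G (FEx x A \<theta>)"
    using \<theta> IsCtx_snocD[OF Form_IsCtx[OF \<theta>]] by (blast intro: Form.ex)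
  with \<phi> \<theta> formula_fsub_p[OF \<phi> Form_IsCtx[OF \<theta>]] show ?thesis
    by (blast intro: Thm.exI Thm.exE)
qed

lemma provable_all_mono:
  assumes \<theta>: "formula (G @ [(x, A)]) \<theta>" and \<theta>': "formula (G @ [(x, A)]) \<theta>'"
    and le: "provable (G @ [(x, A)]) \<theta> \<theta>'"
  shows "provable G (FAll x A \<theta>) (FAll x A \<theta>')"
proof -
  have all: "formula G (FAll x A \<theta>)"
    using \<theta> IsCtx_snocD[OF Form_IsCtx[OF \<theta>]] by (blast intro: Form.all)
  then have "provable (G @ [(x, A)]) (fsub_p fr G x A (FAll x A \<theta>)) \<theta>"
    using provable_all_iff[OF all \<theta>] by (blast intro: Thm.refl)
  then show ?thesis
    using provable_all_iff[OF all \<theta>'] le by (blast intro: Thm.cut)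
qed

lemma provable_ex_mono:
  assumes \<theta>: "formula (G @ [(x, A)]) \<theta>" and \<theta>': "formula (G @ [(x, A)]) \<theta>'"
    and le: "provable (G @ [(x, A)]) \<theta> \<theta>'"
  shows "provable G (FEx x A \<theta>) (FEx x A \<theta>')"
proof -
  have ex: "formula G (FEx x A \<theta>')"
    using \<theta>' IsCtx_snocD[OF Form_IsCtx[OF \<theta>']] by (blast intro: Form.ex)
  then have "provable (G @ [(x, A)]) \<theta>' (fsub_p fr G x A (FEx x A \<theta>'))"
    using provable_ex_iff[OF ex \<theta>'] by (blast intro: Thm.refl)
  then show ?thesis
    using provable_ex_iff[OF ex \<theta>] le by (blast intro: Thm.cut)
qed

lemma first_order_hyperdoctrine_LT:
  assumes DB: "de_bruijn phi fr"
  shows "first_order_hyperdoctrine (FSigma phi fr TD FD) (LT phi fr TD FD PD T)"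
  unfolding first_order_hyperdoctrine_def
  by (intro HOL.conjI ballI is_cwf_FSigma;
      auto simp: FSigma_simps LT_simps pr_heyting_LT heyting_hom_fsub fsub_ident[OF DB] fsub_comp
      provable_all_iff[unfolded fsub_p_def] provable_ex_iff[unfolded fsub_p_def] qmor_def Let_def
      intro: Form.all Form.ex provable_all_mono provable_ex_mono)

end

end

end

theorem mainTheorem17:
  fixes phi :: "'v set \<Rightarrow> 'v set" and fr :: "'v set \<Rightarrow> 'v"
    and TD :: "'t \<Rightarrow> (('v,'f,'t) ctx \<times> nat list) option"
    and FD :: "'f \<Rightarrow> (('v,'f,'t) ctx \<times> nat list \<times> ('v,'f,'t) pty) option"
    and PD :: "'p \<Rightarrow> (('v,'f,'t) ctx \<times> nat list) option"
    and T :: "(('v,'f,'t) ctx \<times> ('v,'f,'t,'p) fm \<times> ('v,'f,'t,'p) fm) set"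
  assumes "var_system phi fr"
    and "de_bruijn phi fr"
    and "is_signature phi TD FD"
    and "is_pred_signature phi TD FD PD"
    and "is_theory phi TD FD PD T"
  shows "first_order_hyperdoctrine (FSigma phi fr TD FD) (LT phi fr TD FD PD T) \<and>
         (\<forall>G \<phi> \<psi>. (G, \<phi>) \<in> Pr (LT phi fr TD FD PD T) G \<longrightarrow> (G, \<psi>) \<in> Pr (LT phi fr TD FD PD T) G \<longrightarrow>
            (hle (LT phi fr TD FD PD T) G (G, \<phi>) (G, \<psi>) \<longleftrightarrow> (G, \<phi>, \<psi>) \<in> Thm phi fr TD FD PD T))"
proof
  show "first_order_hyperdoctrine (FSigma phi fr TD FD) (LT phi fr TD FD PD T)"
    using first_order_hyperdoctrine_LT[OF assms(1,3,4,2)] .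
qed (simp add: LT_def) \<comment> \<open>the order on Pr is provability by definition\<close>

end
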